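(* Let $T\ge 5$ and let $q$ be an integer with $5\le q\le T$. Let $G=(V,E)$ be a finite connected undirected graph with diameter $D$. Consider any execution of Algorithm FS in which the checkpoint set $\mathit{CP}$ is replaced by $\mathit{CP}_q=\{c\in\mathbb{N}_0 : c\equiv 0 \pmod q \text{ and } T-c>q-1\}$, under arbitrary adversarial activations, with rounds numbered so that round $0$ is the first round at whose beginning some node is active. Then for every round $t\ge qD+\bigl\lfloor \frac{D}{\lfloor T/q\rfloor}\bigr\rfloor\cdot(T\bmod q)$, all nodes are active and have equal clock values $\delta_t(v)$.
   Context: Model (beeping model with arbitrary activations). $G=(V,E)$ is a finite connected undirected graph; $N(v)$ is the set of neighbors of $v$. Time proceeds in synchronous rounds. In each round, each active node either beeps or listens; a listening node learns only whether at least one of its neighbors beeped in that round. Algorithm FS (with checkpoint set $C$). Each node $v$ stores $\delta(v)\in\{0,\dots,T-1\}$, $\mathit{State}(v)\in\{\mathit{Inactive},\mathit{Beep},\mathit{Listen}\}$, $\mathit{Induced}(v)\in\{\mathit{true},\mathit{false}\}$. Initially all nodes are Inactive. A node $v$ is activated in round $t$ if the adversary activates it in round $t$, or $v$ is inactive and some neighbor beeps in round $t-1$; then at the beginning of round $t$, $\delta(v)=1$, $\mathit{State}(v)=\mathit{Beep}$, $\mathit{Induced}(v)=\mathit{true}$. In each round each active node $v$, according to its state at the beginning of the round: (1) if $\mathit{State}(v)=\mathit{Beep}$: beeps; $\delta(v)\gets\delta(v)+1\bmod T$; $\mathit{State}(v)\gets\mathit{Listen}$; (2) if $\mathit{State}(v)=\mathit{Listen}$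 and some neighbor beeps: if $\delta(v)\equiv c-1\pmod T$ for some $c\in C$, then $\delta(v)\gets\delta(v)+2\bmod T$, $\mathit{State}(v)\gets\mathit{Beep}$, $\mathit{Induced}(v)\gets\mathit{true}$; else $\delta(v)\gets\delta(v)+1\bmod T$; (3) if $\mathit{State}(v)=\mathit{Listen}$ and no neighbor beeps: $\delta(v)\gets\delta(v)+1\bmod T$; then if ($\mathit{Induced}(v)=\mathit{true}$ and new $\delta(v)\in C$) or new $\delta(v)=0$: $\mathit{State}(v)\gets\mathit{Beep}$, $\mathit{Induced}(v)\gets\mathit{false}$. $\delta_t(v)$ denotes the value at the beginning of round $t$. *)

theory Defs
  imports Main "HOL-Number_Theory.Cong"
begin

inductive walk_len :: "('v \<Rightarrow> 'v \<Rightarrow> bool) \<Rightarrow> 'v \<Rightarrow> 'v \<Rightarrow> nat \<Rightarrow> bool"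
  for E where
  walk_nil: "walk_len E u u 0"
| walk_cons: "E u w \<Longrightarrow> walk_len E w v n \<Longrightarrow> walk_len E u v (Suc n)"

definition gdist :: "('v \<Rightarrow> 'v \<Rightarrow> bool) \<Rightarrow> 'v \<Rightarrow> 'v \<Rightarrow> nat" where
  "gdist E u v = (LEAST n. walk_len E u v n)"

definition ugraph :: "'v set \<Rightarrow> ('v \<Rightarrow> 'v \<Rightarrow> bool) \<Rightarrow> bool" where
  "ugraph V E \<longleftrightarrow> finite V \<and> V \<noteq> {}
     \<and> (\<forall>u v. E u v \<longrightarrow> u \<in> V \<and> v \<in> V)
     \<and> (\<forall>u v. E u v \<longrightarrow> E v u)
     \<and> (\<forall>u. \<not> E u u)"

definition gconnected :: "'v set \<Rightarrow> ('v \<Rightarrow> 'v \<Rightarrow> bool) \<Rightarrow> bool" where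
  "gconnected V E \<longleftrightarrow> (\<forall>u\<in>V. \<forall>v\<in>V. \<exists>n. walk_len E u v n)"

definition diameter :: "'v set \<Rightarrow> ('v \<Rightarrow> 'v \<Rightarrow> bool) \<Rightarrow> nat" where
  "diameter V E = Max {gdist E u v | u v. u \<in> V \<and> v \<in> V}"

datatype phase = Beep | Listen

text \<open>Node configuration: None = Inactive; Some (State, delta, Induced).\<close>
type_synonym 'v config = "'v \<Rightarrow> (phase \<times> nat \<times> bool) option"

definition beeping :: "'v config \<Rightarrow> 'v \<Rightarrow> bool" where
  "beeping cfg u = (case cfg u of None \<Rightarrow> False | Some (p, _, _) \<Rightarrow> p = Beep)"

definition hears :: "('v \<Rightarrow> 'v \<Rightarrow> bool) \<Rightarrow> 'v config \<Rightarrow> 'v \<Rightarrow> bool" where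
  "hears E cfg v = (\<exists>u. E v u \<and> beeping cfg u)"

text \<open>Configuration at the beginning of round t+1, from that of round t.
  act t v: the adversary activates v in round t (no effect on active nodes).\<close>
definition fs_step :: "nat \<Rightarrow> nat set \<Rightarrow> ('v \<Rightarrow> 'v \<Rightarrow> bool) \<Rightarrow> (nat \<Rightarrow> 'v \<Rightarrow> bool)
    \<Rightarrow> nat \<Rightarrow> 'v config \<Rightarrow> 'v config" where
  "fs_step T C E act t cfg = (\<lambda>v.
     case cfg v of
       None \<Rightarrow> (if act (Suc t) v \<or> hears E cfg v then Some (Beep, 1, True) else None)
     | Some (Beep, d, ind) \<Rightarrow> Some (Listen, (d + 1) mod T, ind)
     | Some (Listen, d, ind) \<Rightarrow>
         (if hears E cfg v then
            (if \<exists>c\<in>C. [int d = int c - 1] (mod int T)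
             then Some (Beep, (d + 2) mod T, True)
             else Some (Listen, (d + 1) mod T, ind))
          else
            (let d' = (d + 1) mod T in
             if (ind \<and> d' \<in> C) \<or> d' = 0 then Some (Beep, d', False)
             else Some (Listen, d', ind))))"

text \<open>Execution: configuration at the beginning of round t. Round 0 is the first round
  at whose beginning some node is active; before it all nodes are inactive.\<close>
primrec fs_run :: "nat \<Rightarrow> nat set \<Rightarrow> ('v \<Rightarrow> 'v \<Rightarrow> bool) \<Rightarrow> (nat \<Rightarrow> 'v \<Rightarrow> bool)
    \<Rightarrow> nat \<Rightarrow> 'v config" where
  "fs_run T C E act 0 = (\<lambda>v. if act 0 v then Some (Beep, 1, True) else None)"
| "fs_run T C E act (Suc t) = fs_step T C E act t (fs_run T C E act t)"

definition CP_q :: "nat \<Rightarrow> nat \<Rightarrow> nat set" where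
  "CP_q q T = {c. c mod q = 0 \<and> int T - int c > int q - 1}"

end

theory Submission
  imports Defs
begin

text \<open>Write a node's clock as \<open>(t + 1 - lag) mod T\<close>: the lag of a node is set when it wakes up,
  never increases, and drops by one exactly when the node, listening just before a checkpoint,
  hears a beep and skips a value. A family of invariants shows that the lags of neighbours differ
  by at most one (by two only transiently, while the one behind is about to catch up), and that a
  node whose lag has reached zero keeps its neighbours' lags at zero. Consequently, at each
  checkpoint the lag of every node that lags behind a neighbour decreases: either the neighbour
  ahead beeps and the node jumps, or the neighbour beeps spontaneously at the checkpoint. By
  induction along a shortest walk from an initially active node, a node at distance \<open>k\<close> has lag
  at most \<open>k - j\<close> from the \<open>j\<close>-th checkpoint on. Consecutive checkpoints are \<open>q\<close> rounds apart
  except for an extra \<open>T mod q\<close> at the end of each period of \<open>T div q\<close> checkpoints, whence the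
  bound on the synchronisation time.\<close>

lemma cong_pred_iff_Suc_mod_mem:
  fixes d T :: nat
  assumes "d < T" and "\<forall>c\<in>C. c < T"
  shows "(\<exists>c\<in>C. [int d = int c - 1] (mod int T)) \<longleftrightarrow> Suc d mod T \<in> C"
proof
  assume "\<exists>c\<in>C. [int d = int c - 1] (mod int T)"
  then obtain c where c: "c \<in> C" "[int d = int c - 1] (mod int T)" by blast
  then have "[int d + 1 = int c] (mod int T)"
    by (metis cong_add_rcancel diff_add_cancel)
  then have "[Suc d = c] (mod T)"
    by (metis cong_int_iff of_nat_Suc add.commute)
  then have "Suc d mod T = c" using c assms unfolding cong_def by simp
  then show "Suc d mod T \<in> C" using c by simp
next
  assume h: "Suc d mod T \<in> C"
  have "[Suc d = Suc d mod T] (mod T)" by (simp add: cong_def)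
  then have "[int (Suc d) = int (Suc d mod T)] (mod int T)" using cong_int_iff by blast
  then have "[int d = int (Suc d mod T) - 1] (mod int T)"
    by (metis add_diff_cancel_right' cong_diff of_nat_Suc cong_refl add.commute)
  then show "\<exists>c\<in>C. [int d = int c - 1] (mod int T)" using h by blast
qed

lemma walk_len_0_iff: "walk_len E a v 0 \<longleftrightarrow> v = a"
  by (auto elim: walk_len.cases intro: walk_len.intros)

lemma walk_len_SucE:
  assumes "walk_len E a v (Suc n)"
  obtains u where "walk_len E a u n" and "E u v"
  using assms
proof (induction n arbitrary: a thesis)
  case 0
  then show ?case by (auto elim: walk_len.cases intro: walk_len.intros)
next
  case (Suc n)
  from Suc.prems(2) obtain w where w: "E a w" "walk_len E w v (Suc n)"
    by (auto elim: walk_len.cases)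
  from Suc.IH[OF _ w(2)] obtain u where "walk_len E w u n" "E u v" by blast
  then show ?case using w(1) Suc.prems(1) by (auto intro: walk_len.intros)
qed

lemma walk_len_gdist: "\<exists>n. walk_len E u v n \<Longrightarrow> walk_len E u v (gdist E u v)"
  unfolding gdist_def by (rule LeastI_ex)

lemma gdist_le_diameter:
  assumes "finite V" and "u \<in> V" and "v \<in> V"
  shows "gdist E u v \<le> diameter V E"
proof -
  have "{gdist E u w | u w. u \<in> V \<and> w \<in> V} = (\<lambda>(u, w). gdist E u w) ` (V \<times> V)" by auto
  then have "finite {gdist E u w | u w. u \<in> V \<and> w \<in> V}" using assms(1) by simp
  then show ?thesis unfolding diameter_def using assms(2,3) by (intro Max_ge) auto
qed

lemma beeping_iff: "beeping c v \<longleftrightarrow> (\<exists>d ind. c v = Some (Beep, d, ind))"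
  by (auto simp: beeping_def split: option.splits)

lemma mem_CP_q_iff: "c \<in> CP_q q T \<longleftrightarrow> c mod q = 0 \<and> c + q \<le> T"
  unfolding CP_q_def by auto

section \<open>Checkpoints\<close>

locale fs_execution =
  fixes T q :: nat and E :: "'v \<Rightarrow> 'v \<Rightarrow> bool" and act :: "nat \<Rightarrow> 'v \<Rightarrow> bool"
  assumes q_ge_5: "5 \<le> q" and q_le_T: "q \<le> T" and sym_E: "E u v \<Longrightarrow> E v u"
begin

abbreviation "C \<equiv> CP_q q T"

abbreviation "cfg t \<equiv> fs_run T C E act t"

definition is_checkpoint :: "nat \<Rightarrow> bool" where
  "is_checkpoint x \<longleftrightarrow> x mod T \<in> C"

lemma T_ge_5: "5 \<le> T"
  using q_ge_5 q_le_T by simp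

lemma CP_q_lt_T: "c \<in> C \<Longrightarrow> c < T"
  using q_ge_5 by (auto simp: mem_CP_q_iff)

lemma zero_mem_CP_q: "0 \<in> C"
  using q_le_T by (simp add: mem_CP_q_iff)

lemma checkpoint_sep:
  assumes "is_checkpoint a" and "is_checkpoint b" and "a < b"
  shows "a + q \<le> b"
proof (rule ccontr)
  assume "\<not> a + q \<le> b"
  moreover define e where "e = b - a"
  ultimately have e: "b = a + e" "0 < e" "e < q" using assms(3) by auto
  have a: "a mod T mod q = 0" "a mod T + q \<le> T"
    using assms(1) by (auto simp: is_checkpoint_def mem_CP_q_iff)
  have b: "b mod T mod q = 0" using assms(2) by (auto simp: is_checkpoint_def mem_CP_q_iff)
  have "b mod T = (a mod T + e) mod T" using e(1) by (simp add: mod_add_left_eq)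
  also have "\<dots> = a mod T + e" using a e by simp
  finally have "(a mod T + e) mod q = 0" using b by simp
  then have "e mod q = 0" using a(1) by (metis mod_add_right_eq add.commute mod_add_left_eq add_0)
  then show False using e by simp
qed

lemma checkpoints_eq_or_far:
  "is_checkpoint a \<Longrightarrow> is_checkpoint b \<Longrightarrow> a = b \<or> a + 5 \<le> b \<or> b + 5 \<le> a"
  using checkpoint_sep[of a b] checkpoint_sep[of b a] q_ge_5
  by (cases a b rule: linorder_cases) auto

lemma checkpoint_ge_5: "is_checkpoint x \<Longrightarrow> 0 < x \<Longrightarrow> 5 \<le> x"
  using checkpoint_sep[of 0 x] q_ge_5 zero_mem_CP_q by (auto simp: is_checkpoint_def)

text \<open>Each period of \<open>T\<close> rounds contains the \<open>T div q\<close> checkpoints \<open>0, q, 2q, \<dots>\<close>, so the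
  \<open>j\<close>-th checkpoint lies at \<open>(j div (T div q)) * T + q * (j mod (T div q))\<close>.\<close>

definition nth_checkpoint :: "nat \<Rightarrow> nat" where
  "nth_checkpoint j = q * j + (j div (T div q)) * (T mod q)"

lemma T_div_q_pos: "0 < T div q"
  using q_ge_5 q_le_T by (simp add: div_greater_zero_iff)

lemma nth_checkpoint_eq: "nth_checkpoint j = (j div (T div q)) * T + q * (j mod (T div q))"
proof -
  let ?m = "T div q" and ?r = "T mod q"
  have "q * j = q * ((j div ?m) * ?m) + q * (j mod ?m)"
    by (metis div_mult_mod_eq distrib_left)
  moreover have "(j div ?m) * T = (j div ?m) * ?m * q + (j div ?m) * ?r"
    by (metis div_mult_mod_eq add_mult_distrib2 mult.assoc)
  ultimately show ?thesis unfolding nth_checkpoint_def by (simp add: algebra_simps)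
qed

lemma is_checkpoint_nth_checkpoint: "is_checkpoint (nth_checkpoint j)"
proof -
  let ?m = "T div q"
  have "j mod ?m < ?m" using T_div_q_pos by simp
  then have "q * (j mod ?m) + q \<le> q * ?m"
    by (metis Suc_leI add.commute mult_Suc_right mult_le_mono2)
  also have "\<dots> \<le> T" by (metis div_times_less_eq_dividend mult.commute)
  finally have le: "q * (j mod ?m) + q \<le> T" .
  then have "nth_checkpoint j mod T = q * (j mod ?m)" using q_ge_5 by (simp add: nth_checkpoint_eq)
  then show ?thesis using le by (simp add: is_checkpoint_def mem_CP_q_iff)
qed

lemma nth_checkpoint_Suc_ge: "nth_checkpoint j + q \<le> nth_checkpoint (Suc j)"
  unfolding nth_checkpoint_def by (simp add: div_le_mono mult_le_mono1)

lemma nth_checkpoint_0 [simp]: "nth_checkpoint 0 = 0"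
  by (simp add: nth_checkpoint_def)

lemma nth_checkpoint_mono: "j \<le> k \<Longrightarrow> nth_checkpoint j \<le> nth_checkpoint k"
proof (induction k rule: dec_induct)
  case (step k)
  then show ?case using nth_checkpoint_Suc_ge[of k] by linarith
qed simp

section \<open>Lags and the invariant of Algorithm FS\<close>

text \<open>An active node \<open>v\<close> has clock \<open>uclock t v mod T\<close> in round \<open>t\<close> (\<open>clock_inv\<close>); for
  nodes inactive in round \<open>t\<close> the value \<open>lag t v\<close> is meaningless.\<close>

primrec lag :: "nat \<Rightarrow> 'v \<Rightarrow> nat" where
  "lag 0 v = 0"
| "lag (Suc t) v = (case cfg t v of
      None \<Rightarrow> Suc t
    | Some (p, d, ind) \<Rightarrow>
        if p = Listen \<and> hears E (cfg t) v \<and> Suc d mod T \<in> C then lag t v - 1 else lag t v)"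

definition uclock :: "nat \<Rightarrow> 'v \<Rightarrow> nat" where
  "uclock t v = Suc t - lag t v"

lemma cfg_Suc_Some:
  assumes "cfg t v = Some (p, d, ind)" "d < T"
  shows "cfg (Suc t) v = (if p = Beep then Some (Listen, Suc d mod T, ind)
     else if hears E (cfg t) v then (if Suc d mod T \<in> C then Some (Beep, Suc (Suc d) mod T, True)
          else Some (Listen, Suc d mod T, ind))
     else if (ind \<and> Suc d mod T \<in> C) \<or> Suc d mod T = 0 then Some (Beep, Suc d mod T, False)
     else Some (Listen, Suc d mod T, ind))"
proof -
  have ci: "(\<exists>c\<in>C. [int d = int c - 1] (mod int T)) \<longleftrightarrow> Suc d mod T \<in> C"
    using cong_pred_iff_Suc_mod_mem[OF assms(2)] CP_q_lt_T by blast
  show ?thesis using assms(1) ci by (cases p) (auto simp: fs_step_def Let_def)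
qed

lemma cfg_Suc_None:
  "cfg t v = None \<Longrightarrow>
     cfg (Suc t) v = (if act (Suc t) v \<or> hears E (cfg t) v then Some (Beep, 1, True) else None)"
  by (simp add: fs_step_def)

definition clock_inv :: "nat \<Rightarrow> bool" where
  "clock_inv t \<longleftrightarrow>
     (\<forall>v p d ind. cfg t v = Some (p, d, ind) \<longrightarrow> lag t v \<le> t \<and> d = uclock t v mod T)"

text \<open>Induced beeps happen on waking up or right after jumping over a checkpoint; the other beeps
  happen exactly at checkpoints.\<close>

definition beep_inv :: "nat \<Rightarrow> bool" where
  "beep_inv t \<longleftrightarrow> (\<forall>v d ind. cfg t v = Some (Beep, d, ind) \<longrightarrow>
     (ind \<longrightarrow> lag t v = t \<or> is_checkpoint (uclock t v - 1)) \<and> (\<not> ind \<longrightarrow> is_checkpoint (uclock t v)))"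

text \<open>A gap of two between neighbours only occurs when \<open>v\<close> has just jumped over a checkpoint
  that \<open>u\<close> is about to reach: \<open>u\<close> hears the beep of \<open>v\<close> and jumps as well.\<close>

definition lag_gap_inv :: "nat \<Rightarrow> bool" where
  "lag_gap_inv t \<longleftrightarrow> (\<forall>u v. E u v \<longrightarrow> cfg t u \<noteq> None \<longrightarrow> cfg t v \<noteq> None \<longrightarrow>
     lag t u \<le> lag t v + 1 \<or>
     (lag t u = lag t v + 2 \<and> is_checkpoint (Suc (uclock t u)) \<and> beeping (cfg t) v))"

definition frontier_inv :: "nat \<Rightarrow> bool" where
  "frontier_inv t \<longleftrightarrow> (\<forall>u v. E u v \<longrightarrow> cfg t u \<noteq> None \<longrightarrow> cfg t v = None \<longrightarrow>
     lag t u = t \<and> beeping (cfg t) u)"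

definition synced_inv :: "nat \<Rightarrow> bool" where
  "synced_inv t \<longleftrightarrow> (\<forall>u d. cfg t u = Some (Listen, d, False) \<longrightarrow> lag t u = 0 \<longrightarrow>
     (\<forall>v. E u v \<longrightarrow> cfg t v \<noteq> None \<and> lag t v = 0))"

definition fs_inv :: "nat \<Rightarrow> bool" where
  "fs_inv t \<longleftrightarrow> clock_inv t \<and> beep_inv t \<and> lag_gap_inv t \<and> frontier_inv t \<and> synced_inv t"

lemma not_before_checkpoint_if_beeping:
  assumes "fs_inv t" and "cfg t v = Some (Beep, d, ind)"
  shows "\<not> is_checkpoint (Suc (uclock t v))"
proof
  assume before: "is_checkpoint (Suc (uclock t v))"
  have "lag t v \<le> t" using assms unfolding fs_inv_def clock_inv_def by blast
  then have pos: "1 \<le> uclock t v" by (simp add: uclock_def)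
  have "uclock t v = 1 \<or> is_checkpoint (uclock t v - 1) \<or> is_checkpoint (uclock t v)"
    using assms unfolding fs_inv_def beep_inv_def uclock_def by fastforce
  then show False
  proof (elim disjE)
    assume "uclock t v = 1"
    then show False using checkpoint_ge_5[OF before] by simp
  next
    assume "is_checkpoint (uclock t v - 1)"
    then show False using checkpoints_eq_or_far[OF _ before] pos by fastforce
  next
    assume "is_checkpoint (uclock t v)"
    then show False using checkpoints_eq_or_far[OF _ before] by fastforce
  qed
qed

text \<open>A node with lag zero hears only neighbours of lag at most one, whose beeps lie within three
  rounds of its own next checkpoint.\<close>

lemma lag_pos_if_hears_before_checkpoint:
  assumes "fs_inv t" and "cfg t v = Some (Listen, d, ind)"
    and before: "is_checkpoint (Suc (uclock t v))" and "hears E (cfg t) v"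
  shows "1 \<le> lag t v"
proof (rule ccontr)
  assume "\<not> 1 \<le> lag t v"
  then have v0: "lag t v = 0" by simp
  obtain u where u: "E v u" "beeping (cfg t) u" using assms(4) unfolding hears_def by blast
  then obtain du iu where cu: "cfg t u = Some (Beep, du, iu)" by (auto simp: beeping_iff)
  have "\<not> beeping (cfg t) v" using assms(2) by (simp add: beeping_def)
  then have "lag t u \<le> 1"
    using assms(1,2) sym_E[OF u(1)] cu v0 unfolding fs_inv_def lag_gap_inv_def by fastforce
  moreover have "lag t u \<le> t" using assms(1) cu unfolding fs_inv_def clock_inv_def by blast
  ultimately have near: "uclock t u \<le> uclock t v" "uclock t v \<le> Suc (uclock t u)"
    using v0 by (auto simp: uclock_def)
  have "lag t u = t \<or> is_checkpoint (uclock t u - 1) \<or> is_checkpoint (uclock t u)"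
    using assms(1) cu unfolding fs_inv_def beep_inv_def by blast
  then show False
  proof (elim disjE)
    assume "lag t u = t"
    then have "Suc (uclock t v) \<le> 3" using near \<open>lag t u \<le> 1\<close> by (simp add: uclock_def)
    then show False using checkpoint_ge_5[OF before] by simp
  next
    assume "is_checkpoint (uclock t u - 1)"
    then show False using checkpoints_eq_or_far[OF _ before] near by fastforce
  next
    assume "is_checkpoint (uclock t u)"
    then show False using checkpoints_eq_or_far[OF _ before] near by fastforce
  qed
qed

lemma active_step_cases:
  assumes I: "fs_inv t" and c: "cfg t v = Some (p, d, ind)"
  obtains (beep) "p = Beep" "cfg (Suc t) v = Some (Listen, Suc (uclock t v) mod T, ind)"
      "lag (Suc t) v = lag t v" "uclock (Suc t) v = Suc (uclock t v)"
  | (jump) "p = Listen" "is_checkpoint (Suc (uclock t v))" "hears E (cfg t) v" "1 \<le> lag t v"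
      "cfg (Suc t) v = Some (Beep, Suc (Suc (uclock t v)) mod T, True)"
      "lag (Suc t) v = lag t v - 1" "uclock (Suc t) v = Suc (Suc (uclock t v))"
  | (spontaneous) "p = Listen" "\<not> hears E (cfg t) v" "ind \<or> Suc (uclock t v) mod T = 0"
      "is_checkpoint (Suc (uclock t v))"
      "cfg (Suc t) v = Some (Beep, Suc (uclock t v) mod T, False)"
      "lag (Suc t) v = lag t v" "uclock (Suc t) v = Suc (uclock t v)"
  | (listen) "p = Listen" "\<not> (is_checkpoint (Suc (uclock t v)) \<and> hears E (cfg t) v)"
      "\<not> (\<not> hears E (cfg t) v \<and> is_checkpoint (Suc (uclock t v)) \<and>
          (ind \<or> Suc (uclock t v) mod T = 0))"
      "cfg (Suc t) v = Some (Listen, Suc (uclock t v) mod T, ind)"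
      "lag (Suc t) v = lag t v" "uclock (Suc t) v = Suc (uclock t v)"
proof -
  have l: "lag t v \<le> t" and d: "d = uclock t v mod T"
    using I c unfolding fs_inv_def clock_inv_def by blast+
  have dT: "d < T" using d T_ge_5 by simp
  have s1: "Suc d mod T = Suc (uclock t v) mod T" using d by (simp add: mod_Suc_eq)
  have s2: "Suc (Suc d) mod T = Suc (Suc (uclock t v)) mod T" using d by (metis mod_Suc_eq)
  have cp: "Suc d mod T \<in> C \<longleftrightarrow> is_checkpoint (Suc (uclock t v))"
    using s1 by (simp add: is_checkpoint_def)
  have z: "Suc (uclock t v) mod T = 0 \<Longrightarrow> is_checkpoint (Suc (uclock t v))"
    using zero_mem_CP_q by (simp add: is_checkpoint_def)
  note cfg_Suc = cfg_Suc_Some[OF c dT] and lag_Suc = lag.simps(2)[of t v, unfolded c, simplified]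
  show thesis
  proof (cases p)
    case Beep
    then show thesis using beep cfg_Suc lag_Suc s1 l by (simp add: uclock_def Suc_diff_le)
  next
    case Listen
    show thesis
    proof (cases "is_checkpoint (Suc (uclock t v)) \<and> hears E (cfg t) v")
      case True
      have "1 \<le> lag t v" using lag_pos_if_hears_before_checkpoint[OF I] c Listen True by blast
      then show thesis using jump Listen True cfg_Suc lag_Suc cp s2 l by (simp add: uclock_def)
    next
      case no_jump: False
      show thesis
      proof (cases "\<not> hears E (cfg t) v \<and> is_checkpoint (Suc (uclock t v)) \<and>
          (ind \<or> Suc (uclock t v) mod T = 0)")
        case True
        then show thesis using spontaneous Listen cfg_Suc lag_Suc cp s1 l
          by (auto simp: uclock_def Suc_diff_le)
      next
        case False
        then have "cfg (Suc t) v = Some (Listen, Suc (uclock t v) mod T, ind)"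
          using cfg_Suc Listen no_jump cp s1 z by auto
        then show thesis using listen Listen no_jump False lag_Suc cp l
          by (auto simp: uclock_def Suc_diff_le)
      qed
    qed
  qed
qed

lemma fs_inv_0: "fs_inv 0"
  using T_ge_5
  by (auto simp: fs_inv_def clock_inv_def beep_inv_def lag_gap_inv_def frontier_inv_def
      synced_inv_def uclock_def beeping_def split: if_splits)

lemma lag_le: "fs_inv t \<Longrightarrow> cfg t v \<noteq> None \<Longrightarrow> lag t v \<le> t"
  unfolding fs_inv_def clock_inv_def by auto

lemma active_step:
  assumes "fs_inv t" "cfg t v \<noteq> None"
  shows "cfg (Suc t) v \<noteq> None \<and>
    ((lag (Suc t) v = lag t v \<and> uclock (Suc t) v = Suc (uclock t v)) \<or>
     (lag (Suc t) v = lag t v - 1 \<and> 1 \<le> lag t v \<and> uclock (Suc t) v = Suc (Suc (uclock t v)) \<and>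
      is_checkpoint (Suc (uclock t v)) \<and> beeping (cfg (Suc t)) v \<and> \<not> beeping (cfg t) v))"
proof -
  obtain p d ind where c: "cfg t v = Some (p, d, ind)" using assms(2) by auto
  show ?thesis
    by (rule active_step_cases[OF assms(1) c]) (auto simp: beeping_def c)
qed

lemma jumps_if_hears_before_checkpoint:
  assumes "fs_inv t" and "cfg t v = Some (p, d, ind)"
    and "is_checkpoint (Suc (uclock t v))" and "hears E (cfg t) v"
  shows "lag (Suc t) v = lag t v - 1 \<and> 1 \<le> lag t v"
proof -
  have pl: "p = Listen"
    using not_before_checkpoint_if_beeping[OF assms(1)] assms(2,3) by (cases p) auto
  show ?thesis by (rule active_step_cases[OF assms(1) assms(2)]) (use assms pl in auto)
qed

lemma lag_Suc_eq_if_beeping: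
  assumes "fs_inv t" "beeping (cfg t) v" shows "lag (Suc t) v = lag t v"
proof -
  obtain d ind where c: "cfg t v = Some (Beep, d, ind)" using assms(2) by (auto simp: beeping_iff)
  show ?thesis by (rule active_step_cases[OF assms(1) c]) auto
qed

lemma newly_active:
  assumes "cfg t v = None" "cfg (Suc t) v \<noteq> None"
  shows "cfg (Suc t) v = Some (Beep, 1, True) \<and> lag (Suc t) v = Suc t \<and> uclock (Suc t) v = 1"
  using assms cfg_Suc_None[OF assms(1)] by (auto simp: uclock_def split: if_splits)

lemma clock_inv_Suc: "fs_inv t \<Longrightarrow> clock_inv (Suc t)"
  unfolding clock_inv_def
proof (intro allI impI)
  fix v p d ind assume I: "fs_inv t" and c: "cfg (Suc t) v = Some (p, d, ind)"
  show "lag (Suc t) v \<le> Suc t \<and> d = uclock (Suc t) v mod T"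
  proof (cases "cfg t v")
    case None
    then show ?thesis using newly_active[OF None] c T_ge_5 by auto
  next
    case (Some a)
    then obtain p0 d0 i0 where c0: "cfg t v = Some (p0, d0, i0)" by (cases a) auto
    have l: "lag t v \<le> t" using lag_le[OF I] c0 by simp
    show ?thesis by (rule active_step_cases[OF I c0]) (use c l in auto)
  qed
qed

lemma beep_inv_Suc: "fs_inv t \<Longrightarrow> beep_inv (Suc t)"
  unfolding beep_inv_def
proof (intro allI impI)
  fix v d ind assume I: "fs_inv t" and c: "cfg (Suc t) v = Some (Beep, d, ind)"
  show "(ind \<longrightarrow> lag (Suc t) v = Suc t \<or> is_checkpoint (uclock (Suc t) v - 1)) \<and>
    (\<not> ind \<longrightarrow> is_checkpoint (uclock (Suc t) v))"
  proof (cases "cfg t v")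
    case None
    then show ?thesis using newly_active[OF None] c by auto
  next
    case (Some a)
    then obtain p0 d0 i0 where c0: "cfg t v = Some (p0, d0, i0)" by (cases a) auto
    show ?thesis by (rule active_step_cases[OF I c0]) (use c in auto)
  qed
qed

lemma frontier_inv_Suc: "fs_inv t \<Longrightarrow> frontier_inv (Suc t)"
  unfolding frontier_inv_def
proof (intro allI impI)
  fix u v assume I: "fs_inv t" and e: "E u v"
    and cu: "cfg (Suc t) u \<noteq> None" and cv: "cfg (Suc t) v = None"
  have cv0: "cfg t v = None" using active_step[OF I] cv by blast
  show "lag (Suc t) u = Suc t \<and> beeping (cfg (Suc t)) u"
  proof (cases "cfg t u")
    case None
    then show ?thesis using newly_active[OF None cu] by (simp add: beeping_def)
  next
    case (Some a)
    then have "beeping (cfg t) u" using I e cv0 unfolding fs_inv_def frontier_inv_def by blast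
    then have "hears E (cfg t) v" using sym_E[OF e] by (auto simp: hears_def)
    then have "cfg (Suc t) v \<noteq> None" using cfg_Suc_None[OF cv0] by simp
    then show ?thesis using cv by simp
  qed
qed

lemma lag_gap_Suc_if_active:
  assumes I: "fs_inv t" and e: "E u v" and ua: "cfg t u \<noteq> None" and va: "cfg t v \<noteq> None"
  shows "lag (Suc t) u \<le> lag (Suc t) v + 1 \<or>
    (lag (Suc t) u = lag (Suc t) v + 2 \<and> is_checkpoint (Suc (uclock (Suc t) u)) \<and>
     beeping (cfg (Suc t)) v)"
proof (cases "lag t u \<le> lag t v + 1")
  case gap_le_1: True
  show ?thesis
  proof (cases "lag (Suc t) u \<le> lag (Suc t) v + 1")
    case False
    then have v_jumps: "lag (Suc t) v = lag t v - 1" "1 \<le> lag t v"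
        "is_checkpoint (Suc (uclock t v))" "beeping (cfg (Suc t)) v"
      and u_steps: "lag (Suc t) u = lag t u" "uclock (Suc t) u = Suc (uclock t u)"
      using active_step[OF I ua] active_step[OF I va] gap_le_1 by auto
    then have "lag t u = lag t v + 1" using False gap_le_1 by linarith
    moreover have "lag t u \<le> t" "lag t v \<le> t" using lag_le[OF I] ua va by auto
    ultimately have "Suc (uclock (Suc t) u) = Suc (uclock t v)"
      using u_steps by (simp add: uclock_def)
    then show ?thesis using v_jumps u_steps \<open>lag t u = lag t v + 1\<close> by auto
  qed simp
next
  case False
  moreover have "lag t u \<le> lag t v + 1 \<or>
      (lag t u = lag t v + 2 \<and> is_checkpoint (Suc (uclock t u)) \<and> beeping (cfg t) v)"
    using I e ua va unfolding fs_inv_def lag_gap_inv_def by blast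
  ultimately have gap_2: "lag t u = lag t v + 2" "is_checkpoint (Suc (uclock t u))"
      "beeping (cfg t) v"
    by auto
  obtain p d ind where c: "cfg t u = Some (p, d, ind)" using ua by auto
  have "hears E (cfg t) u" using e gap_2(3) by (auto simp: hears_def)
  then have "lag (Suc t) u = lag t u - 1"
    using jumps_if_hears_before_checkpoint[OF I c gap_2(2)] by blast
  then show ?thesis using lag_Suc_eq_if_beeping[OF I gap_2(3)] gap_2(1) by simp
qed

lemma lag_gap_inv_Suc: "fs_inv t \<Longrightarrow> lag_gap_inv (Suc t)"
  unfolding lag_gap_inv_def
proof (intro allI impI)
  fix u v assume I: "fs_inv t" and e: "E u v"
    and cu: "cfg (Suc t) u \<noteq> None" and cv: "cfg (Suc t) v \<noteq> None"
  consider "cfg t u = None" "cfg t v = None" | "cfg t u = None" "cfg t v \<noteq> None"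
    | "cfg t u \<noteq> None" "cfg t v = None" | "cfg t u \<noteq> None" "cfg t v \<noteq> None" by blast
  then show "lag (Suc t) u \<le> lag (Suc t) v + 1 \<or>
    (lag (Suc t) u = lag (Suc t) v + 2 \<and> is_checkpoint (Suc (uclock (Suc t) u)) \<and>
     beeping (cfg (Suc t)) v)"
  proof cases
    case 1
    then show ?thesis using newly_active[OF _ cu] newly_active[OF _ cv] by simp
  next
    case 2
    then have "lag t v = t \<and> beeping (cfg t) v"
      using I sym_E[OF e] unfolding fs_inv_def frontier_inv_def by blast
    then show ?thesis using newly_active[OF _ cu] lag_Suc_eq_if_beeping[OF I] 2 by simp
  next
    case 3
    then have "lag t u = t \<and> beeping (cfg t) u"
      using I e unfolding fs_inv_def frontier_inv_def by blast
    then show ?thesis using newly_active[OF _ cv] lag_Suc_eq_if_beeping[OF I] 3 by simp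
  next
    case 4
    then show ?thesis using lag_gap_Suc_if_active[OF I e] by blast
  qed
qed

text \<open>A neighbour of lag one is just before the checkpoint and jumps on hearing \<open>u\<close>; a lag of
  two would put a checkpoint one round before the one of \<open>u\<close>.\<close>

lemma neighbour_synced_after_checkpoint_beep:
  assumes I: "fs_inv t" and cu: "cfg t u = Some (Beep, d, False)" and u0: "lag t u = 0"
    and e: "E u v"
  shows "cfg (Suc t) v \<noteq> None \<and> lag (Suc t) v = 0"
proof -
  have cp_u: "is_checkpoint (Suc t)"
    using I cu u0 unfolding fs_inv_def beep_inv_def uclock_def by fastforce
  have va: "cfg t v \<noteq> None"
  proof
    assume "cfg t v = None"
    then have "lag t u = t" using I e cu unfolding fs_inv_def frontier_inv_def by blast
    then show False using cp_u u0 checkpoint_ge_5[of 1] by simp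
  qed
  have lv: "lag t v \<le> t" using lag_le[OF I va] .
  have "lag t v \<le> 1"
  proof (rule ccontr)
    assume "\<not> lag t v \<le> 1"
    then have "is_checkpoint (Suc (uclock t v))" "Suc (uclock t v) = t"
      using I sym_E[OF e] cu va u0 lv unfolding fs_inv_def lag_gap_inv_def
      by (fastforce simp: uclock_def)+
    then show False using checkpoints_eq_or_far[OF _ cp_u] by fastforce
  qed
  then consider "lag t v = 0" | "lag t v = 1" by linarith
  then show ?thesis
  proof cases
    case 1
    then show ?thesis using active_step[OF I va] by auto
  next
    case 2
    obtain p d ind where cv: "cfg t v = Some (p, d, ind)" using va by auto
    have "is_checkpoint (Suc (uclock t v))" using 2 cp_u lv by (simp add: uclock_def)
    moreover have "hears E (cfg t) v" using sym_E[OF e] cu by (auto simp: hears_def beeping_def)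
    ultimately show ?thesis
      using jumps_if_hears_before_checkpoint[OF I cv] active_step[OF I va] 2 by auto
  qed
qed

lemma synced_inv_Suc: "fs_inv t \<Longrightarrow> synced_inv (Suc t)"
  unfolding synced_inv_def
proof (intro allI impI)
  fix u d v assume I: "fs_inv t" and c: "cfg (Suc t) u = Some (Listen, d, False)"
    and l0: "lag (Suc t) u = 0" and e: "E u v"
  have "cfg t u \<noteq> None" using newly_active[of t u] c by (cases "cfg t u") auto
  then obtain p0 d0 i0 where c0: "cfg t u = Some (p0, d0, i0)" by auto
  show "cfg (Suc t) v \<noteq> None \<and> lag (Suc t) v = 0"
  proof (rule active_step_cases[OF I c0])
    assume "p0 = Beep" "cfg (Suc t) u = Some (Listen, Suc (uclock t u) mod T, i0)"
      "lag (Suc t) u = lag t u"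
    then show ?thesis using neighbour_synced_after_checkpoint_beep[OF I _ _ e] c0 c l0 by simp
  next
    assume "cfg (Suc t) u = Some (Beep, Suc (Suc (uclock t u)) mod T, True)"
    then show ?thesis using c by simp
  next
    assume "cfg (Suc t) u = Some (Beep, Suc (uclock t u) mod T, False)"
    then show ?thesis using c by simp
  next
    assume "p0 = Listen" "cfg (Suc t) u = Some (Listen, Suc (uclock t u) mod T, i0)"
      "lag (Suc t) u = lag t u"
    then have "cfg t v \<noteq> None \<and> lag t v = 0"
      using I c0 c e l0 unfolding fs_inv_def synced_inv_def by auto
    then show ?thesis using active_step[OF I] by fastforce
  qed
qed

lemma fs_inv_holds: "fs_inv t"
  by (induction t)
    (use fs_inv_0 clock_inv_Suc beep_inv_Suc lag_gap_inv_Suc frontier_inv_Suc synced_inv_Suc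
      in \<open>auto simp: fs_inv_def\<close>)

section \<open>Convergence\<close>

lemma clock_eq_uclock_mod: "cfg t v = Some (p, d, ind) \<Longrightarrow> d = uclock t v mod T"
  using fs_inv_holds[of t] unfolding fs_inv_def clock_inv_def by blast

lemma active_mono_lag_antimono:
  assumes "cfg t v \<noteq> None" and "t \<le> t'"
  shows "cfg t' v \<noteq> None \<and> lag t' v \<le> lag t v"
  using assms(2)
proof (induction t' rule: dec_induct)
  case base then show ?case using assms(1) by simp
next
  case (step n)
  then show ?case using active_step[OF fs_inv_holds, of n v] by auto
qed

lemma active_Suc_if_neighbour_active:
  assumes "cfg t u \<noteq> None" and "E u v"
  shows "cfg (Suc t) v \<noteq> None"
proof (cases "cfg t v")
  case None
  then have "beeping (cfg t) u"
    using fs_inv_holds[of t] assms unfolding fs_inv_def frontier_inv_def by blast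
  then have "hears E (cfg t) v" using sym_E[OF assms(2)] by (auto simp: hears_def)
  then show ?thesis using cfg_Suc_None[OF None] by simp
next
  case (Some x) then show ?thesis using active_step[OF fs_inv_holds, of t v] by auto
qed

lemma active_along_walk: "act 0 a \<Longrightarrow> walk_len E a v k \<Longrightarrow> cfg k v \<noteq> None"
proof (induction k arbitrary: v)
  case 0 then show ?case by (simp add: walk_len_0_iff)
next
  case (Suc k)
  from Suc.prems(2) obtain u where "walk_len E a u k" "E u v" by (rule walk_len_SucE)
  then show ?case using Suc active_Suc_if_neighbour_active by blast
qed

lemma beeping_if_lag_gap_2:
  assumes "E v u" and "cfg t u \<noteq> None" and "cfg t v \<noteq> None" and "lag t u + 2 \<le> lag t v"
  shows "beeping (cfg t) u"
  using fs_inv_holds[of t] assms unfolding fs_inv_def lag_gap_inv_def by fastforce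

lemma beeping_Suc_if_synced_before_checkpoint:
  assumes "E u v" and "cfg t u \<noteq> None" and "lag t u = 0"
    and "is_checkpoint (Suc (Suc t))" and "lag t v \<noteq> 0"
  shows "beeping (cfg (Suc t)) u"
proof -
  obtain p d ind where c: "cfg t u = Some (p, d, ind)" using assms(2) by auto
  have before: "is_checkpoint (Suc (uclock t u))" using assms(3,4) by (simp add: uclock_def)
  have listen: "p = Listen"
    using not_before_checkpoint_if_beeping[OF fs_inv_holds] c before by (cases p) auto
  have induced: "ind"
  proof (rule ccontr)
    assume "\<not> ind"
    then have "cfg t u = Some (Listen, d, False)" using c listen by simp
    then have "lag t v = 0"
      using fs_inv_holds[of t] assms(1,3) unfolding fs_inv_def synced_inv_def by blast
    then show False using assms(5) by simp
  qed
  have no_hear: "\<not> hears E (cfg t) u"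
  proof
    assume "hears E (cfg t) u"
    then show False
      using jumps_if_hears_before_checkpoint[OF fs_inv_holds c before] assms(3) by simp
  qed
  show ?thesis
    by (rule active_step_cases[OF fs_inv_holds c])
      (use listen induced no_hear before in \<open>auto simp: beeping_def\<close>)
qed

definition lag_bounded :: "'v \<Rightarrow> nat \<Rightarrow> nat \<Rightarrow> bool" where
  "lag_bounded v s b \<longleftrightarrow> (\<forall>t\<ge>s. cfg t v \<noteq> None \<and> lag t v \<le> b)"

lemma lag_boundedI: "cfg s v \<noteq> None \<Longrightarrow> lag s v \<le> b \<Longrightarrow> lag_bounded v s b"
  unfolding lag_bounded_def using active_mono_lag_antimono by (meson le_trans)

text \<open>If \<open>v\<close> reaches
  the \<open>(j+1)\<close>-th checkpoint with its old lag, then \<open>u\<close> beeps right before: either \<open>u\<close> is two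
  ahead of \<open>v\<close>, or \<open>j = k\<close>, \<open>u\<close> is already synchronised and beeps spontaneously.\<close>

lemma neighbour_beeps_before_checkpoint:
  assumes e: "E u v" and jk: "j \<le> k"
    and v_bound: "lag_bounded v (nth_checkpoint j + (Suc k - j)) (Suc k - j)"
    and u_bound: "\<forall>i\<le>k. lag_bounded u (nth_checkpoint i + (k - i)) (k - i)"
    and \<tau>: "Suc \<tau> = nth_checkpoint (Suc j) + (k - j)" and lag_v: "lag \<tau> v = Suc k - j"
  shows "beeping (cfg \<tau>) u"
proof -
  have gap: "nth_checkpoint j + q \<le> nth_checkpoint (Suc j)" by (rule nth_checkpoint_Suc_ge)
  show ?thesis
  proof (cases "j < k")
    case True
    have "cfg \<tau> v \<noteq> None" using v_bound gap q_ge_5 \<tau> unfolding lag_bounded_def by simp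
    moreover have "lag_bounded u (nth_checkpoint (Suc j) + (k - Suc j)) (k - Suc j)"
      using u_bound True by simp
    then have "cfg \<tau> u \<noteq> None" "lag \<tau> u \<le> k - Suc j"
      using True \<tau> unfolding lag_bounded_def by auto
    ultimately show ?thesis using beeping_if_lag_gap_2[OF sym_E[OF e]] lag_v True by simp
  next
    case False
    then have jk': "j = k" using jk by simp
    define \<sigma> where "\<sigma> = \<tau> - 1"
    have \<tau>\<sigma>: "\<tau> = Suc \<sigma>" using gap q_ge_5 \<tau> unfolding \<sigma>_def by simp
    have u\<sigma>: "cfg \<sigma> u \<noteq> None" "lag \<sigma> u = 0"
      using u_bound gap q_ge_5 \<tau> jk' unfolding \<sigma>_def lag_bounded_def by auto
    have v\<sigma>: "cfg \<sigma> v \<noteq> None" "lag \<sigma> v \<le> 1"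
      using v_bound gap q_ge_5 \<tau> jk' unfolding \<sigma>_def lag_bounded_def by auto
    have "lag \<tau> v \<le> lag \<sigma> v" using active_mono_lag_antimono[OF v\<sigma>(1), of \<tau>] \<tau>\<sigma> by linarith
    then have "lag \<sigma> v \<noteq> 0" using lag_v jk' by simp
    moreover have "is_checkpoint (Suc (Suc \<sigma>))"
      using is_checkpoint_nth_checkpoint[of "Suc j"] \<tau> \<tau>\<sigma> jk' by simp
    ultimately show ?thesis using beeping_Suc_if_synced_before_checkpoint[OF e u\<sigma>] \<tau>\<sigma> by simp
  qed
qed

lemma lag_bounded_Suc_checkpoint:
  assumes e: "E u v" and jk: "j \<le> k"
    and v_bound: "lag_bounded v (nth_checkpoint j + (Suc k - j)) (Suc k - j)"
    and u_bound: "\<forall>i\<le>k. lag_bounded u (nth_checkpoint i + (k - i)) (k - i)"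
  shows "lag_bounded v (nth_checkpoint (Suc j) + (k - j)) (k - j)"
proof -
  define t0 where "t0 = nth_checkpoint (Suc j) + (k - j)"
  define \<tau> where "\<tau> = t0 - 1"
  have gap: "nth_checkpoint j + q \<le> nth_checkpoint (Suc j)" by (rule nth_checkpoint_Suc_ge)
  have t0: "Suc \<tau> = t0" using gap q_ge_5 unfolding \<tau>_def t0_def by simp
  have v\<tau>: "cfg \<tau> v \<noteq> None" "lag \<tau> v \<le> Suc k - j"
    using v_bound gap q_ge_5 jk unfolding \<tau>_def t0_def lag_bounded_def by auto
  have t0_mono: "cfg t0 v \<noteq> None \<and> lag t0 v \<le> lag \<tau> v"
    using active_mono_lag_antimono[OF v\<tau>(1)] t0 by (metis le_SucI order_refl)
  have "lag t0 v \<le> k - j"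
  proof (rule ccontr)
    assume "\<not> lag t0 v \<le> k - j"
    then have lag_v: "lag \<tau> v = Suc k - j" "lag t0 v = lag \<tau> v" using t0_mono v\<tau>(2) by auto
    have "Suc (uclock \<tau> v) = nth_checkpoint (Suc j)"
      using lag_v(1) lag_le[OF fs_inv_holds v\<tau>(1)] jk gap q_ge_5
      unfolding uclock_def \<tau>_def t0_def by simp
    then have before: "is_checkpoint (Suc (uclock \<tau> v))" using is_checkpoint_nth_checkpoint by simp
    have "beeping (cfg \<tau>) u"
      using neighbour_beeps_before_checkpoint[OF e jk v_bound u_bound _ lag_v(1)] t0 t0_def by simp
    then have "hears E (cfg \<tau>) v" using sym_E[OF e] by (auto simp: hears_def)
    then obtain p d ind where "cfg \<tau> v = Some (p, d, ind)"
      "lag (Suc \<tau>) v = lag \<tau> v - 1" "1 \<le> lag \<tau> v"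
      using v\<tau>(1) jumps_if_hears_before_checkpoint[OF fs_inv_holds _ before] by fastforce
    then show False using lag_v t0 by simp
  qed
  then show ?thesis using lag_boundedI t0_mono unfolding t0_def by blast
qed

lemma lag_bounded_along_walk:
  assumes "act 0 a" and "walk_len E a v k" and "j \<le> k"
  shows "lag_bounded v (nth_checkpoint j + (k - j)) (k - j)"
  using assms(3,2)
proof (induction k arbitrary: v j)
  case 0
  then show ?case
    using lag_boundedI[of 0 a 0] assms(1) by (simp add: walk_len_0_iff)
next
  case (Suc k)
  note IH_walk = Suc.IH
  from Suc.prems(2) obtain u where walk_u: "walk_len E a u k" and e: "E u v"
    by (rule walk_len_SucE)
  have u_bound: "\<forall>i\<le>k. lag_bounded u (nth_checkpoint i + (k - i)) (k - i)"
    using IH_walk walk_u by blast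
  show ?case
    using Suc.prems(1)
  proof (induction j)
    case 0
    have "cfg (Suc k) v \<noteq> None" using active_along_walk[OF assms(1) Suc.prems(2)] .
    then show ?case
      using lag_boundedI lag_le[OF fs_inv_holds, of "Suc k" v] by simp
  next
    case (Suc j)
    then show ?case using lag_bounded_Suc_checkpoint[OF e _ _ u_bound] by simp
  qed
qed

end

theorem mainTheorem2:
  fixes T q :: nat and V :: "'v set" and E :: "'v \<Rightarrow> 'v \<Rightarrow> bool"
    and act :: "nat \<Rightarrow> 'v \<Rightarrow> bool"
  assumes "T \<ge> 5" and "5 \<le> q" and "q \<le> T"
    and "ugraph V E" and "gconnected V E"
    and "\<exists>v\<in>V. act 0 v"
  shows "\<forall>t \<ge> q * diameter V E + (diameter V E div (T div q)) * (T mod q).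
           \<exists>d. \<forall>v\<in>V. \<exists>p ind. fs_run T (CP_q q T) E act t v = Some (p, d, ind)"
proof (intro allI impI)
  interpret fs_execution T q E act
    using assms by unfold_locales (auto simp: ugraph_def)
  fix t assume "q * diameter V E + (diameter V E div (T div q)) * (T mod q) \<le> t"
  then have t: "nth_checkpoint (diameter V E) \<le> t" by (simp add: nth_checkpoint_def)
  obtain a where a: "a \<in> V" "act 0 a" using assms(6) by blast
  have synced: "cfg t v \<noteq> None \<and> lag t v = 0" if v: "v \<in> V" for v
  proof -
    let ?k = "gdist E a v"
    have walk: "walk_len E a v ?k"
      using assms(5) a(1) v by (intro walk_len_gdist) (simp add: gconnected_def)
    have "?k \<le> diameter V E"
      using assms(4) a(1) v by (intro gdist_le_diameter) (simp_all add: ugraph_def)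
    then have "nth_checkpoint ?k \<le> t" using nth_checkpoint_mono t by fastforce
    then show ?thesis
      using lag_bounded_along_walk[OF a(2) walk le_refl] unfolding lag_bounded_def by simp
  qed
  show "\<exists>d. \<forall>v\<in>V. \<exists>p ind. cfg t v = Some (p, d, ind)"
  proof (rule exI[of _ "Suc t mod T"], rule ballI)
    fix v assume "v \<in> V"
    then obtain p d ind where c: "cfg t v = Some (p, d, ind)" and "lag t v = 0"
      using synced by fastforce
    then have "d = Suc t mod T" using clock_eq_uclock_mod[OF c] by (simp add: uclock_def)
    then show "\<exists>p ind. cfg t v = Some (p, Suc t mod T, ind)" using c by blast
  qed
qed

end
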